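(* Let $\Phi(x,y)=(P(x,y),Q(x,y))$ be a divergence-free jacobian map of degree $n$. Then there exist $\alpha,\beta\in\mathbb{R}$ with $\alpha^2+\beta^2\neq 0$ and $\varepsilon_2,\dots,\varepsilon_n\in\mathbb{R}$ such that $$P(x,y)=x+\sum_{i=2}^n\varepsilon_i\,\alpha(\beta x-\alpha y)^i,\qquad Q(x,y)=y+\sum_{i=2}^n\varepsilon_i\,\beta(\beta x-\alpha y)^i.$$
   Context: A jacobian map is a real polynomial map $\Phi:\mathbb{R}^2\to\mathbb{R}^2$ whose jacobian determinant $\det J_\Phi$ is a non-zero constant. A divergence-free jacobian map is a jacobian map of the form $P(x,y)=x+\sum_{i=2}^n p_i(x,y)$, $Q(x,y)=y+\sum_{i=2}^n q_i(x,y)$, where $p_i,q_i$ are real homogeneous polynomials of degree $i$, such that $\frac{\partial}{\partial x}\sum_{i=2}^n p_i+\frac{\partial}{\partial y}\sum_{i=2}^n q_i=0$ identically. Its degree is the maximal total degree of $P,Q$. *)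

theory Defs
  imports "HOL-Analysis.Analysis"
begin

definition hpoly :: "(nat \<Rightarrow> real) \<Rightarrow> nat \<Rightarrow> real \<Rightarrow> real \<Rightarrow> real" where
  "hpoly c i x y = (\<Sum>j=0..i. c j * x ^ j * y ^ (i - j))"

definition nlpart :: "(nat \<Rightarrow> nat \<Rightarrow> real) \<Rightarrow> nat \<Rightarrow> real \<Rightarrow> real \<Rightarrow> real" where
  "nlpart a n x y = (\<Sum>i=2..n. hpoly (a i) i x y)"

definition jac_det :: "(real \<Rightarrow> real \<Rightarrow> real) \<Rightarrow> (real \<Rightarrow> real \<Rightarrow> real) \<Rightarrow> real \<Rightarrow> real \<Rightarrow> real" where
  "jac_det P Q x y =
     deriv (\<lambda>t. P t y) x * deriv (\<lambda>t. Q x t) y - deriv (\<lambda>t. P x t) y * deriv (\<lambda>t. Q t y) x"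

end

theory Submission
  imports Defs "HOL-Computational_Algebra.Polynomial"
begin

text \<open>Write \<open>P = x + F\<close> and \<open>Q = y + G\<close>. Since the Jacobian determinant is constant it equals
  its value \<open>1\<close> at the origin; together with \<open>F\<^sub>x + G\<^sub>y = 0\<close> this makes the Jacobian matrix of
  \<open>(F, G)\<close> nilpotent: \<open>G\<^sub>y = -F\<^sub>x\<close> and \<open>F\<^sub>x\<^sup>2 + F\<^sub>y G\<^sub>x = 0\<close>. Then \<open>F\<close> and \<open>G\<close> are first
  integrals of the Hamiltonian field \<open>(F\<^sub>y, -F\<^sub>x)\<close>, and nilpotency makes the integral curves of
  this field straight lines. Two field lines with different directions meet, so unless \<open>F\<close> is
  constant all field lines are parallel to one vector \<open>v\<close>. Hence \<open>F\<close> and \<open>G\<close> are constant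
  along \<open>v\<close>, i.e. polynomials in the linear form \<open>v\<^sub>2 x - v\<^sub>1 y\<close>, and the trace condition makes
  \<open>(F, G)\<close> proportional to \<open>v\<close>.

  Bivariate polynomials are encoded as \<open>real poly poly\<close>: the outer variable is \<open>y\<close> and the
  coefficients are polynomials in \<open>x\<close>, so \<open>pderiv\<close> is the partial derivative in \<open>y\<close>.\<close>

definition poly2 :: "real poly poly \<Rightarrow> real \<Rightarrow> real \<Rightarrow> real" where
  "poly2 F x y = poly (poly F [:y:]) x"

definition pderiv_x :: "real poly poly \<Rightarrow> real poly poly" where
  "pderiv_x F = map_poly pderiv F"

definition deriv_along ::
    "real poly poly \<Rightarrow> real poly poly \<Rightarrow> real poly poly \<Rightarrow> real poly poly" where
  "deriv_along K1 K2 F = pderiv_x F * K1 + pderiv F * K2"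

text \<open>The derivative of the field along itself is parallel to the field, i.e. its integral
  curves are straight lines.\<close>
definition straight_field :: "real poly poly \<Rightarrow> real poly poly \<Rightarrow> bool" where
  "straight_field K1 K2 \<longleftrightarrow> K1 * deriv_along K1 K2 K2 - K2 * deriv_along K1 K2 K1 = 0"

text \<open>The restriction of \<open>F\<close> to the line \<open>s \<mapsto> (x0 + s d1, y0 + s d2)\<close>.\<close>
definition poly2_line :: "real poly poly \<Rightarrow> real \<Rightarrow> real \<Rightarrow> real \<Rightarrow> real \<Rightarrow> real poly" where
  "poly2_line F x0 y0 d1 d2 = poly (map_poly (\<lambda>c. pcompose c [:x0, d1:]) F) [:y0, d2:]"

lemma poly2_pCons: "poly2 (pCons a F) x y = poly a x + y * poly2 F x y"
  by (simp add: poly2_def)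

lemma poly2_add [simp]: "poly2 (F + G) x y = poly2 F x y + poly2 G x y"
  and poly2_diff [simp]: "poly2 (F - G) x y = poly2 F x y - poly2 G x y"
  and poly2_minus [simp]: "poly2 (- F) x y = - poly2 F x y"
  and poly2_mult [simp]: "poly2 (F * G) x y = poly2 F x y * poly2 G x y"
  and poly2_power [simp]: "poly2 (F ^ k) x y = poly2 F x y ^ k"
  and poly2_sum [simp]: "poly2 (\<Sum>i\<in>A. H i) x y = (\<Sum>i\<in>A. poly2 (H i) x y)"
  and poly2_smult [simp]: "poly2 (smult a F) x y = poly a x * poly2 F x y"
  and poly2_const [simp]: "poly2 [:[:c:]:] x y = c"
  and poly2_0 [simp]: "poly2 0 x y = 0"
  and poly2_X [simp]: "poly2 [:[:0, 1:]:] x y = x"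
  and poly2_Y [simp]: "poly2 [:0, 1:] x y = y"
  by (simp_all add: poly2_def poly_power poly_sum)

lemma coeff_poly_pCons_const: "coeff (poly F [:y:]) k = poly (map_poly (\<lambda>c. coeff c k) F) y"
  by (induction F) (simp_all add: map_poly_pCons)

lemma poly2_eq_0I:
  assumes "\<And>x y. poly2 F x y = 0"
  shows "F = 0"
proof (rule poly_eqI)
  have "poly F [:y:] = 0" for y
    using assms by (simp add: poly2_def poly_all_0_iff_0[symmetric])
  then have "map_poly (\<lambda>c. coeff c k) F = 0" for k
    by (metis coeff_0 coeff_poly_pCons_const poly_all_0_iff_0)
  then have "coeff (coeff F i) k = 0" for i k
    by (metis coeff_0 coeff_map_poly)
  then show "coeff F i = coeff 0 i" for i
    by (simp add: poly_eq_iff)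
qed

lemma poly2_eqI: "(\<And>x y. poly2 F x y = poly2 G x y) \<Longrightarrow> F = G"
  using poly2_eq_0I[of "F - G"] by simp

lemma poly2_line_pCons:
  "poly2_line (pCons a F) x0 y0 d1 d2 = pcompose a [:x0, d1:] + [:y0, d2:] * poly2_line F x0 y0 d1 d2"
  by (simp add: poly2_line_def map_poly_pCons)

lemma poly_poly2_line [simp]:
  "poly (poly2_line F x0 y0 d1 d2) s = poly2 F (x0 + s * d1) (y0 + s * d2)"
  by (induction F)
    (simp_all add: poly2_line_pCons poly2_pCons poly_pcompose algebra_simps, simp add: poly2_line_def)

lemma poly2_line_add [simp]:
    "poly2_line (F + G) x0 y0 d1 d2 = poly2_line F x0 y0 d1 d2 + poly2_line G x0 y0 d1 d2"
  and poly2_line_mult [simp]: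
    "poly2_line (F * G) x0 y0 d1 d2 = poly2_line F x0 y0 d1 d2 * poly2_line G x0 y0 d1 d2"
  and poly2_line_diff [simp]:
    "poly2_line (F - G) x0 y0 d1 d2 = poly2_line F x0 y0 d1 d2 - poly2_line G x0 y0 d1 d2"
  and poly2_line_smult [simp]:
    "poly2_line (smult [:c:] F) x0 y0 d1 d2 = smult c (poly2_line F x0 y0 d1 d2)"
  and poly2_line_const [simp]: "poly2_line [:[:c:]:] x0 y0 d1 d2 = [:c:]"
  and poly2_line_0 [simp]: "poly2_line 0 x0 y0 d1 d2 = 0"
  by (simp_all add: poly2_def poly_eq_poly_eq_iff[symmetric] fun_eq_iff)

lemma pderiv_x_pCons: "pderiv_x (pCons a F) = pCons (pderiv a) (pderiv_x F)"
  by (simp add: pderiv_x_def map_poly_pCons)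

lemma pderiv_x_0 [simp]: "pderiv_x 0 = 0"
  by (simp add: pderiv_x_def)

lemma pderiv_poly2_line:
  "pderiv (poly2_line F x0 y0 d1 d2) = poly2_line (deriv_along [:[:d1:]:] [:[:d2:]:] F) x0 y0 d1 d2"
proof (induction F)
  case (pCons a F)
  let ?L = "\<lambda>H. poly2_line H x0 y0 d1 d2"
  have lin: "pderiv [:x0, d1:] = [:d1:]" "pderiv [:y0, d2:] = [:d2:]"
    by (simp_all add: pderiv_pCons)
  have "pderiv (?L (pCons a F)) =
      pcompose (pderiv a) [:x0, d1:] * [:d1:] + ([:y0, d2:] * pderiv (?L F) + ?L F * [:d2:])"
    by (simp only: poly2_line_pCons pderiv_add pderiv_mult pderiv_pcompose lin)
  also have "\<dots> = ?L (deriv_along [:[:d1:]:] [:[:d2:]:] (pCons a F))"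
    by (simp add: pCons.IH deriv_along_def pderiv_x_pCons pderiv_pCons poly2_line_pCons
        pcompose_mult pcompose_smult algebra_simps)
  finally show ?case .
qed (simp add: deriv_along_def)

lemma has_real_derivative_poly2_x:
  "((\<lambda>t. poly2 F t y) has_real_derivative poly2 (pderiv_x F) x y) (at x)"
proof -
  have "(\<lambda>t. poly2 F t y) = poly (poly2_line F 0 y 1 0)"
    by (simp add: fun_eq_iff)
  moreover have "poly (pderiv (poly2_line F 0 y 1 0)) x = poly2 (pderiv_x F) x y"
    by (simp only: pderiv_poly2_line poly_poly2_line deriv_along_def poly2_add poly2_mult
        poly2_const) simp
  ultimately show ?thesis
    by (metis poly_DERIV)
qed

lemma has_real_derivative_poly2_y:
  "((\<lambda>t. poly2 F x t) has_real_derivative poly2 (pderiv F) x y) (at y)"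
proof -
  have "(\<lambda>t. poly2 F x t) = poly (poly2_line F x 0 0 1)"
    by (simp add: fun_eq_iff)
  moreover have "poly (pderiv (poly2_line F x 0 0 1)) y = poly2 (pderiv F) x y"
    by (simp only: pderiv_poly2_line poly_poly2_line deriv_along_def poly2_add poly2_mult
        poly2_const) simp
  ultimately show ?thesis
    by (metis poly_DERIV)
qed

lemma deriv_poly2_x: "deriv (\<lambda>t. poly2 F t y) x = poly2 (pderiv_x F) x y"
  by (rule DERIV_imp_deriv) (rule has_real_derivative_poly2_x)

lemma deriv_poly2_y: "deriv (\<lambda>t. poly2 F x t) y = poly2 (pderiv F) x y"
  by (rule DERIV_imp_deriv) (rule has_real_derivative_poly2_y)

lemma pderiv_x_eqI:
  assumes "\<And>x y. ((\<lambda>t. poly2 F t y) has_real_derivative poly2 G x y) (at x)"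
  shows "pderiv_x F = G"
  by (rule poly2_eqI) (meson DERIV_unique has_real_derivative_poly2_x assms)

lemma pderiv_x_diff: "pderiv_x (F - G) = pderiv_x F - pderiv_x G"
  and pderiv_x_minus: "pderiv_x (- F) = - pderiv_x F"
  and pderiv_x_smult: "pderiv_x (smult [:c:] F) = smult [:c:] (pderiv_x F)"
  and pderiv_x_const: "pderiv_x [:[:c:]:] = 0"
  by (rule pderiv_x_eqI; auto intro!: derivative_eq_intros has_real_derivative_poly2_x)+

lemma pderiv_x_pderiv_commute: "pderiv_x (pderiv F) = pderiv (pderiv_x F)"
  by (rule poly_eqI) (simp add: pderiv_x_def coeff_map_poly coeff_pderiv pderiv_mult pderiv_add)

lemma poly_eq_poly_0_if_pderiv_eq_0:
  fixes p :: "real poly"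
  assumes "pderiv p = 0"
  shows "poly p s = poly p 0"
proof -
  obtain c where "p = [:c:]"
    using assms by (metis degree_0_id pderiv_eq_0_iff)
  then show ?thesis by simp
qed

lemma poly2_const_along_line:
  assumes "deriv_along [:[:d1:]:] [:[:d2:]:] F = 0"
  shows "poly2 F (x0 + s * d1) (y0 + s * d2) = poly2 F x0 y0"
  using poly_eq_poly_0_if_pderiv_eq_0[of "poly2_line F x0 y0 d1 d2" s] assms
  by (simp add: pderiv_poly2_line)

lemma poly2_const_if_grad_eq_0:
  assumes "pderiv_x F = 0" and "pderiv F = 0"
  shows "poly2 F x y = poly2 F 0 0"
  using poly2_const_along_line[of x y F 0 1 0] assms
  by (simp add: deriv_along_def)

lemma poly_eq_0_if_linear_ode:
  fixes N D R :: "'a::{idom, semiring_char_0} poly"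
  assumes ode: "N * pderiv D = D * R" and "poly N a \<noteq> 0" and "poly D a = 0"
  shows "D = 0"
proof (rule ccontr)
  assume "D \<noteq> 0"
  have "pderiv D \<noteq> 0"
  proof
    assume "pderiv D = 0"
    then obtain c where "D = [:c:]"
      by (metis degree_0_id pderiv_eq_0_iff)
    with \<open>poly D a = 0\<close> \<open>D \<noteq> 0\<close> show False by simp
  qed
  with \<open>poly N a \<noteq> 0\<close> have "N * pderiv D \<noteq> 0" by auto
  then have "order a (N * pderiv D) = order a (pderiv D)"
    using \<open>poly N a \<noteq> 0\<close> by (simp add: order_mult order_0I)
  moreover have "D * R \<noteq> 0" "order a D = Suc (order a (pderiv D))"
    using \<open>N * pderiv D \<noteq> 0\<close> ode order_pderiv[OF \<open>D \<noteq> 0\<close> \<open>poly D a = 0\<close>] by auto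
  ultimately show False
    using ode by (simp add: order_mult)
qed

text \<open>Write \<open>N = |g|\<^sup>2\<close>, \<open>D = k \<times> g\<close> and let \<open>h, l\<close> be the columns of the Jacobian of the field
  \<open>g\<close>. Expanding \<open>N k = (k \<cdot> g) g + D g\<^sup>\<bottom>\<close> twice expresses \<open>N\<^sup>2 D'\<close> through the curvature term
  \<open>g \<times> (\<partial>\<^sub>g g)\<close> and a multiple of \<open>D\<close>.\<close>
lemma straight_line_identity:
  fixes g1 g2 h1 h2 l1 l2 k1 k2 :: "'a::comm_ring_1"
  shows "(g1*g1 + g2*g2)^2 * (k1*(k1*h2 + k2*l2) - k2*(k1*h1 + k2*l1)) =
     (k1*g1 + k2*g2)^2 * (g1*(g1*h2 + g2*l2) - g2*(g1*h1 + g2*l1)) +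
     (k1*g2 - k2*g1) * ((k1*g2 - k2*g1) * ((-g2)*(-h2*g2 + l2*g1) - g1*(-h1*g2 + l1*g1))
        - (k1*g1 + k2*g2) * ((g1*(-h2*g2 + l2*g1) - g2*(-h1*g2 + l1*g1))
                           + ((-g2)*(h2*g1 + l2*g2) - g1*(h1*g1 + l1*g2))))"
  by (simp add: algebra_simps power2_eq_square)

lemma straight_field_tangent_on_line:
  fixes K1 K2 :: "real poly poly" and x0 y0 :: real
  defines "k1 \<equiv> poly2 K1 x0 y0" and "k2 \<equiv> poly2 K2 x0 y0"
  assumes straight: "straight_field K1 K2" and nonzero: "(k1, k2) \<noteq> (0, 0)"
  shows "[:k1:] * poly2_line K2 x0 y0 k1 k2 - [:k2:] * poly2_line K1 x0 y0 k1 k2 = 0"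
proof -
  define L where "L H = poly2_line H x0 y0 k1 k2" for H
  define g1 g2 h1 h2 l1 l2 where "g1 = L K1" and "g2 = L K2"
    and "h1 = L (pderiv_x K1)" and "h2 = L (pderiv_x K2)"
    and "l1 = L (pderiv K1)" and "l2 = L (pderiv K2)"
  have "L (K1 * deriv_along K1 K2 K2 - K2 * deriv_along K1 K2 K1) = 0"
    using straight by (simp add: straight_field_def L_def)
  then have curvature: "g1*(g1*h2 + g2*l2) - g2*(g1*h1 + g2*l1) = 0"
    by (simp add: L_def g1_def g2_def h1_def h2_def l1_def l2_def deriv_along_def algebra_simps)
  define N D where "N = g1*g1 + g2*g2" and "D = [:k1:]*g2 - [:k2:]*g1"
  have g_at_0: "poly g1 0 = k1" "poly g2 0 = k2"
    by (simp_all add: g1_def g2_def L_def k1_def k2_def)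
  have "poly N 0 \<noteq> 0"
    using nonzero g_at_0 by (auto simp: N_def add_nonneg_eq_0_iff)
  have pderiv_L: "pderiv (L H) = [:k1:] * L (pderiv_x H) + [:k2:] * L (pderiv H)" for H
    by (simp add: L_def pderiv_poly2_line deriv_along_def mult.commute)
  have pderiv_D: "pderiv D = [:k1:]*([:k1:]*h2 + [:k2:]*l2) - [:k2:]*([:k1:]*h1 + [:k2:]*l1)"
    by (simp add: D_def pderiv_diff pderiv_smult g1_def g2_def h1_def h2_def l1_def l2_def pderiv_L)
  have "\<exists>R. N^2 * pderiv D = D * R"
    unfolding pderiv_D unfolding N_def D_def straight_line_identity curvature by auto
  then obtain R where "N^2 * pderiv D = D * R" ..
  then have "D = 0"
    by (rule poly_eq_0_if_linear_ode[where a = 0])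
      (simp_all add: \<open>poly N 0 \<noteq> 0\<close> g_at_0 D_def mult.commute)
  then show ?thesis
    by (simp add: D_def g1_def g2_def L_def)
qed

lemma first_integral_const_on_field_line:
  assumes straight: "straight_field K1 K2" and first_integral: "deriv_along K1 K2 F = 0"
    and nonzero: "(poly2 K1 x0 y0, poly2 K2 x0 y0) \<noteq> (0, 0)"
  shows "poly2 F (x0 + s * poly2 K1 x0 y0) (y0 + s * poly2 K2 x0 y0) = poly2 F x0 y0"
proof -
  define k1 k2 where "k1 = poly2 K1 x0 y0" and "k2 = poly2 K2 x0 y0"
  define L where "L H = poly2_line H x0 y0 k1 k2" for H
  define g1 g2 A B where "g1 = L K1" and "g2 = L K2"
    and "A = L (pderiv_x F)" and "B = L (pderiv F)"
  have tangent: "[:k1:] * g2 - [:k2:] * g1 = 0"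
    using straight_field_tangent_on_line[OF straight] nonzero
    by (simp add: g1_def g2_def L_def k1_def k2_def)
  have "A * g1 + B * g2 = 0"
    using arg_cong[OF first_integral, of L]
    by (simp add: L_def A_def B_def g1_def g2_def deriv_along_def)
  moreover have "(g1*g1 + g2*g2) * ([:k1:]*A + [:k2:]*B) =
      ([:k1:]*g1 + [:k2:]*g2) * (A*g1 + B*g2) - ([:k1:] * g2 - [:k2:] * g1) * (B*g1 - A*g2)"
    by (simp add: algebra_simps)
  moreover have "poly (g1*g1 + g2*g2) 0 \<noteq> 0"
    using nonzero by (auto simp: g1_def g2_def L_def k1_def k2_def add_nonneg_eq_0_iff)
  ultimately have "[:k1:]*A + [:k2:]*B = 0"
    using tangent by auto
  then have "pderiv (L F) = 0"
    by (simp add: L_def A_def B_def pderiv_poly2_line deriv_along_def algebra_simps)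
  then show ?thesis
    using poly_eq_poly_0_if_pderiv_eq_0[of "L F" s] by (simp add: L_def k1_def k2_def)
qed

text \<open>Through a point where the field is not parallel to \<open>v\<close>, the field line meets the line
  through \<open>(x0, y0)\<close> in direction \<open>v\<close>, so a first integral takes the same value at both points.\<close>
lemma straight_field_parallel:
  assumes straight: "straight_field K1 K2" and first_integral: "deriv_along K1 K2 F = 0"
    and nonzero: "(poly2 K1 x0 y0, poly2 K2 x0 y0) \<noteq> (0, 0)"
    and nonconstant: "pderiv_x F \<noteq> 0 \<or> pderiv F \<noteq> 0"
  shows "[:[:poly2 K1 x0 y0:]:] * K2 - [:[:poly2 K2 x0 y0:]:] * K1 = 0"
proof (rule ccontr)
  define v1 v2 where "v1 = poly2 K1 x0 y0" and "v2 = poly2 K2 x0 y0"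
  define G where "G = [:[:v1:]:] * K2 - [:[:v2:]:] * K1"
  assume "[:[:poly2 K1 x0 y0:]:] * K2 - [:[:poly2 K2 x0 y0:]:] * K1 \<noteq> 0"
  then have "G \<noteq> 0"
    by (simp add: G_def v1_def v2_def)
  have F_eq: "poly2 F x y = poly2 F x0 y0" if "poly2 G x y \<noteq> 0" for x y
  proof -
    define k1 k2 where "k1 = poly2 K1 x y" and "k2 = poly2 K2 x y"
    define \<delta> where "\<delta> = v1 * k2 - v2 * k1"
    have "\<delta> \<noteq> 0"
      using that by (simp add: G_def \<delta>_def k1_def k2_def)
    then have "(k1, k2) \<noteq> (0, 0)"
      by (auto simp: \<delta>_def)
    define s t where "s = ((x - x0) * k2 - (y - y0) * k1) / \<delta>"
      and "t = (v2 * (x - x0) - v1 * (y - y0)) / \<delta>"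
    have "x0 + s * v1 = x + t * k1" "y0 + s * v2 = y + t * k2"
      using \<open>\<delta> \<noteq> 0\<close> by (simp_all add: s_def t_def \<delta>_def field_simps)
    moreover have "poly2 F (x0 + s * v1) (y0 + s * v2) = poly2 F x0 y0"
      using first_integral_const_on_field_line[OF straight first_integral nonzero]
      by (simp add: v1_def v2_def)
    moreover have "poly2 F (x + t * k1) (y + t * k2) = poly2 F x y"
      using first_integral_const_on_field_line[OF straight first_integral] \<open>(k1, k2) \<noteq> (0, 0)\<close>
      by (simp add: k1_def k2_def)
    ultimately show ?thesis
      by simp
  qed
  have "(F - [:[:poly2 F x0 y0:]:]) * G = 0"
    by (rule poly2_eq_0I) (use F_eq in force)
  then have "F = [:[:poly2 F x0 y0:]:]"
    using \<open>G \<noteq> 0\<close> by simp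
  then have "pderiv_x F = 0 \<and> pderiv F = 0"
    by (metis pderiv_x_const pderiv_pCons pderiv_0 add_0 pCons_0_0)
  with nonconstant show False
    by simp
qed

lemma deriv_along_const_if_parallel:
  assumes parallel: "[:[:v1:]:] * K2 - [:[:v2:]:] * K1 = 0" and "K1 \<noteq> 0 \<or> K2 \<noteq> 0"
    and first_integral: "deriv_along K1 K2 F = 0"
  shows "deriv_along [:[:v1:]:] [:[:v2:]:] F = 0"
proof -
  define D where "D = deriv_along [:[:v1:]:] [:[:v2:]:] F"
  have "K1 * D = [:[:v1:]:] * deriv_along K1 K2 F
      - pderiv F * ([:[:v1:]:] * K2 - [:[:v2:]:] * K1)"
    "K2 * D = [:[:v2:]:] * deriv_along K1 K2 F
      + pderiv_x F * ([:[:v1:]:] * K2 - [:[:v2:]:] * K1)"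
    by (simp_all add: D_def deriv_along_def algebra_simps)
  then have "K1 * D = 0" "K2 * D = 0"
    unfolding parallel first_integral by simp_all
  with \<open>K1 \<noteq> 0 \<or> K2 \<noteq> 0\<close> show ?thesis
    by (auto simp: D_def)
qed

lemma straight_field_hamiltonian:
  assumes trace: "pderiv G = - pderiv_x F"
    and det: "pderiv_x F * pderiv_x F + pderiv F * pderiv_x G = 0"
  shows "straight_field (pderiv F) (- pderiv_x F)"
proof -
  define E where "E = pderiv_x F * pderiv_x F + pderiv F * pderiv_x G"
  have "pderiv (pderiv_x G) = - pderiv_x (pderiv_x F)"
    using trace by (simp add: pderiv_x_pderiv_commute[symmetric] pderiv_x_minus)
  then have "pderiv F * deriv_along (pderiv F) (- pderiv_x F) (- pderiv_x F)
      - (- pderiv_x F) * deriv_along (pderiv F) (- pderiv_x F) (pderiv F)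
      = pderiv F * pderiv E - pderiv (pderiv F) * E"
    by (simp add: E_def deriv_along_def pderiv_mult pderiv_add pderiv_minus pderiv_x_minus
        pderiv_x_pderiv_commute algebra_simps)
  then show ?thesis
    using det by (simp add: straight_field_def E_def)
qed

lemma nilpotent_jacobian_const_direction:
  assumes trace: "pderiv G = - pderiv_x F"
    and det: "pderiv_x F * pderiv_x F + pderiv F * pderiv_x G = 0"
  shows "\<exists>v1 v2. (v1, v2) \<noteq> (0, 0) \<and>
    deriv_along [:[:v1:]:] [:[:v2:]:] F = 0 \<and> deriv_along [:[:v1:]:] [:[:v2:]:] G = 0"
proof (cases "pderiv_x F = 0 \<and> pderiv F = 0")
  case True
  then show ?thesis
    using trace by (intro exI[of _ 0] exI[of _ 1]) (simp add: deriv_along_def)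
next
  case False
  define K1 K2 where "K1 = pderiv F" and "K2 = - pderiv_x F"
  then have "K1 \<noteq> 0 \<or> K2 \<noteq> 0"
    using False by auto
  then obtain x0 y0 where nonzero: "(poly2 K1 x0 y0, poly2 K2 x0 y0) \<noteq> (0, 0)"
    by (metis poly2_eq_0I prod.inject)
  have straight: "straight_field K1 K2"
    unfolding K1_def K2_def using trace det by (rule straight_field_hamiltonian)
  have first_integrals: "deriv_along K1 K2 F = 0" "deriv_along K1 K2 G = 0"
    using det trace by (simp_all add: K1_def K2_def deriv_along_def algebra_simps)
  have "[:[:poly2 K1 x0 y0:]:] * K2 - [:[:poly2 K2 x0 y0:]:] * K1 = 0"
    using straight_field_parallel[OF straight first_integrals(1) nonzero] False by auto
  then show ?thesis
    using nonzero deriv_along_const_if_parallel[OF _ \<open>K1 \<noteq> 0 \<or> K2 \<noteq> 0\<close>] first_integrals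
    by blast
qed

lemma poly2_combination_const:
  assumes trace: "pderiv G = - pderiv_x F"
    and F_const: "deriv_along [:[:v1:]:] [:[:v2:]:] F = 0"
    and G_const: "deriv_along [:[:v1:]:] [:[:v2:]:] G = 0"
  shows "v1 * poly2 G x y - v2 * poly2 F x y = v1 * poly2 G 0 0 - v2 * poly2 F 0 0"
proof -
  define U where "U = [:[:v1:]:] * G - [:[:v2:]:] * F"
  have "pderiv_x U = deriv_along [:[:v1:]:] [:[:v2:]:] G"
    "pderiv U = - deriv_along [:[:v1:]:] [:[:v2:]:] F"
    using trace by (simp_all add: U_def deriv_along_def pderiv_x_diff pderiv_x_smult
        pderiv_diff pderiv_smult algebra_simps)
  then have "poly2 U x y = poly2 U 0 0"
    using F_const G_const by (intro poly2_const_if_grad_eq_0) simp_all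
  then show ?thesis
    by (simp add: U_def)
qed

lemma nlpart_eq_poly2: "\<exists>F. \<forall>x y. nlpart c n x y = poly2 F x y"
proof
  show "\<forall>x y. nlpart c n x y = poly2
      (\<Sum>i\<in>{2..n}. \<Sum>j\<in>{0..i}. [:[:c i j:]:] * [:[:0, 1:]:] ^ j * [:0, 1:] ^ (i - j)) x y"
    by (simp add: nlpart_def hpoly_def mult.assoc)
qed

lemma nlpart_linear_comb:
  "nlpart (\<lambda>i j. r * a i j + s * b i j) n x y = r * nlpart a n x y + s * nlpart b n x y"
  by (simp add: nlpart_def hpoly_def sum.distrib sum_distrib_left algebra_simps)

lemma nlpart_x_0: "nlpart c n 0 t = (\<Sum>i=2..n. c i 0 * t ^ i)"
proof -
  have "hpoly (c i) i 0 t = (\<Sum>j=0..i. if j = 0 then c i 0 * t ^ i else 0)" for i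
    unfolding hpoly_def by (rule sum.cong) auto
  then show ?thesis
    by (simp add: nlpart_def)
qed

lemma nlpart_y_0: "nlpart c n t 0 = (\<Sum>i=2..n. c i i * t ^ i)"
proof -
  have "hpoly (c i) i t 0 = (\<Sum>j=0..i. if j = i then c i i * t ^ i else 0)" for i
    unfolding hpoly_def by (rule sum.cong) auto
  then show ?thesis
    by (simp add: nlpart_def)
qed

lemma has_real_derivative_sum_higher_powers:
  "((\<lambda>t. \<Sum>i=2..n. e i * t ^ i) has_real_derivative 0) (at 0)"
proof -
  have "((\<lambda>t. \<Sum>i=2..n. e i * t ^ i)
      has_real_derivative (\<Sum>i=2..n. real i * 0 ^ (i - 1) * e i)) (at 0)"
    by (auto intro!: derivative_eq_intros)
  moreover have "(\<Sum>i=2..n. real i * 0 ^ (i - 1) * e i) = (0::real)"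
    by (intro sum.neutral) auto
  ultimately show ?thesis
    by simp
qed

lemma nlpart_grad_origin:
  "deriv (\<lambda>t. nlpart c n t 0) 0 = 0" "deriv (\<lambda>t. nlpart c n 0 t) 0 = 0"
  by (simp_all add: nlpart_x_0 nlpart_y_0 DERIV_imp_deriv has_real_derivative_sum_higher_powers)

lemma nlpart_poly2_representation:
  obtains F where "\<And>x y. nlpart c n x y = poly2 F x y" and "poly2 F 0 0 = 0"
    and "poly2 (pderiv_x F) 0 0 = 0" and "poly2 (pderiv F) 0 0 = 0"
proof -
  obtain F where F: "\<And>x y. nlpart c n x y = poly2 F x y"
    using nlpart_eq_poly2 by blast
  moreover have "poly2 F 0 0 = 0"
    by (simp add: F[symmetric] nlpart_x_0)
  moreover have "poly2 (pderiv_x F) 0 0 = 0" "poly2 (pderiv F) 0 0 = 0"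
    using nlpart_grad_origin[of c n] by (simp_all add: F deriv_poly2_x deriv_poly2_y)
  ultimately show ?thesis
    using that by blast
qed

lemma nlpart_along_direction:
  assumes v: "(v1, v2) \<noteq> (0, 0)"
    and const: "\<And>x y s. nlpart c n (x + s * v1) (y + s * v2) = nlpart c n x y"
  shows "\<exists>e. \<forall>x y. nlpart c n x y = (\<Sum>i=2..n. e i * (v2 * x - v1 * y) ^ i)"
proof (cases "v1 = 0")
  case False
  have "nlpart c n x y = (\<Sum>i=2..n. c i 0 * (- 1 / v1) ^ i * (v2 * x - v1 * y) ^ i)" for x y
  proof -
    have "nlpart c n x y = nlpart c n 0 ((v1 * y - v2 * x) / v1)"
      using const[of x "- x / v1" y] False by (simp add: field_simps)
    also have "(v1 * y - v2 * x) / v1 = - 1 / v1 * (v2 * x - v1 * y)"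
      using False by (simp add: field_simps)
    finally show ?thesis
      by (simp only: nlpart_x_0 power_mult_distrib mult.assoc)
  qed
  then show ?thesis
    by (intro exI[of _ "\<lambda>i. c i 0 * (- 1 / v1) ^ i"]) blast
next
  case True
  with v have "v2 \<noteq> 0"
    by simp
  have "nlpart c n x y = (\<Sum>i=2..n. c i i / v2 ^ i * (v2 * x - v1 * y) ^ i)" for x y
  proof -
    have "nlpart c n x y = nlpart c n ((v2 * x - v1 * y) / v2) 0"
      using const[of x "- y / v2" y] True \<open>v2 \<noteq> 0\<close> by simp
    then show ?thesis
      by (simp add: nlpart_y_0 power_divide)
  qed
  then show ?thesis
    by (intro exI[of _ "\<lambda>i. c i i / v2 ^ i"]) blast
qed

text \<open>If both parts are constant along \<open>v\<close> and proportional to \<open>v\<close>, they are \<open>v\<close> times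
  the single function \<open>(v1 f + v2 g) / |v|\<^sup>2\<close>.\<close>
lemma nlpart_pair_along_direction:
  assumes v: "(v1, v2) \<noteq> (0, 0)"
    and a_const: "\<And>x y s. nlpart a n (x + s * v1) (y + s * v2) = nlpart a n x y"
    and b_const: "\<And>x y s. nlpart b n (x + s * v1) (y + s * v2) = nlpart b n x y"
    and proportional: "\<And>x y. v1 * nlpart b n x y = v2 * nlpart a n x y"
  shows "\<exists>\<epsilon>. \<forall>x y. nlpart a n x y = (\<Sum>i=2..n. \<epsilon> i * v1 * (v2 * x - v1 * y) ^ i) \<and>
                   nlpart b n x y = (\<Sum>i=2..n. \<epsilon> i * v2 * (v2 * x - v1 * y) ^ i)"
proof -
  define q where "q = v1\<^sup>2 + v2\<^sup>2"
  have "q \<noteq> 0"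
    using v by (simp add: q_def)
  define h where "h = (\<lambda>i j. v1 / q * a i j + v2 / q * b i j)"
  have "nlpart h n (x + s * v1) (y + s * v2) = nlpart h n x y" for x y s
    unfolding h_def nlpart_linear_comb by (simp add: a_const b_const)
  then obtain e where e: "\<And>x y. nlpart h n x y = (\<Sum>i=2..n. e i * (v2 * x - v1 * y) ^ i)"
    using nlpart_along_direction[OF v] by blast
  have "nlpart a n x y = v1 * nlpart h n x y" "nlpart b n x y = v2 * nlpart h n x y" for x y
  proof -
    have h: "nlpart h n x y * q = v1 * nlpart a n x y + v2 * nlpart b n x y"
      unfolding h_def nlpart_linear_comb using \<open>q \<noteq> 0\<close> by (simp add: field_simps)
    show "nlpart a n x y = v1 * nlpart h n x y" "nlpart b n x y = v2 * nlpart h n x y"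
      using \<open>q \<noteq> 0\<close> h proportional[of x y] unfolding q_def power2_eq_square by algebra+
  qed
  then show ?thesis
    by (intro exI[of _ e]) (simp add: e sum_distrib_left algebra_simps)
qed

lemma divergence_free_jacobian_nilpotent:
  assumes P_def: "\<And>x y. P x y = x + poly2 F x y" and Q_def: "\<And>x y. Q x y = y + poly2 G x y"
    and jac: "\<And>x y. jac_det P Q x y = c"
    and divfree: "\<And>x y. deriv (\<lambda>t. poly2 F t y) x + deriv (\<lambda>t. poly2 G x t) y = 0"
    and origin: "poly2 (pderiv_x F) 0 0 = 0" "poly2 (pderiv F) 0 0 = 0"
  shows "pderiv G = - pderiv_x F" and "pderiv_x F * pderiv_x F + pderiv F * pderiv_x G = 0"
proof -
  show trace: "pderiv G = - pderiv_x F"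
    using divfree
    by (intro poly2_eqI) (simp add: deriv_poly2_x deriv_poly2_y eq_neg_iff_add_eq_0 add.commute)
  have "deriv (\<lambda>t. P t y) x = 1 + poly2 (pderiv_x F) x y"
    "deriv (\<lambda>t. P x t) y = poly2 (pderiv F) x y"
    "deriv (\<lambda>t. Q t y) x = poly2 (pderiv_x G) x y"
    "deriv (\<lambda>t. Q x t) y = 1 + poly2 (pderiv G) x y" for x y
    unfolding P_def Q_def
    by (auto intro!: DERIV_imp_deriv derivative_eq_intros has_real_derivative_poly2_x
        has_real_derivative_poly2_y)
  then have jac_formula: "jac_det P Q x y =
      (1 + poly2 (pderiv_x F) x y) * (1 + poly2 (pderiv G) x y)
      - poly2 (pderiv F) x y * poly2 (pderiv_x G) x y" for x y
    by (simp add: jac_det_def)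
  have "c = 1"
    using jac[of 0 0] by (simp add: jac_formula origin trace)
  then have "(1 + poly2 (pderiv_x F) x y) * (1 + poly2 (pderiv G) x y)
      - poly2 (pderiv F) x y * poly2 (pderiv_x G) x y = 1" for x y
    using jac[of x y] by (simp only: jac_formula)
  then show "pderiv_x F * pderiv_x F + pderiv F * pderiv_x G = 0"
    by (intro poly2_eqI) (simp add: trace algebra_simps)
qed

theorem theorem1:
  fixes a b :: "nat \<Rightarrow> nat \<Rightarrow> real" and n :: nat
    and P Q :: "real \<Rightarrow> real \<Rightarrow> real"
  assumes P_def: "\<And>x y. P x y = x + nlpart a n x y"
    and Q_def: "\<And>x y. Q x y = y + nlpart b n x y"
    and jac: "\<exists>c. c \<noteq> 0 \<and> (\<forall>x y. jac_det P Q x y = c)"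
    and divfree: "\<And>x y. deriv (\<lambda>t. nlpart a n t y) x + deriv (\<lambda>t. nlpart b n x t) y = 0"
    and n_ge: "n \<ge> 1"
    and degree: "n \<ge> 2 \<Longrightarrow> (\<exists>j\<le>n. a n j \<noteq> 0 \<or> b n j \<noteq> 0)"
  shows "\<exists>\<alpha> \<beta> (\<epsilon>::nat \<Rightarrow> real). \<alpha>\<^sup>2 + \<beta>\<^sup>2 \<noteq> 0 \<and>
           (\<forall>x y. P x y = x + (\<Sum>i=2..n. \<epsilon> i * \<alpha> * (\<beta> * x - \<alpha> * y) ^ i) \<and>
                  Q x y = y + (\<Sum>i=2..n. \<epsilon> i * \<beta> * (\<beta> * x - \<alpha> * y) ^ i))"
proof -
  obtain F where F: "\<And>x y. nlpart a n x y = poly2 F x y" and F_0: "poly2 F 0 0 = 0"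
    and F_grad_0: "poly2 (pderiv_x F) 0 0 = 0" "poly2 (pderiv F) 0 0 = 0"
    by (rule nlpart_poly2_representation[of a n]) (rule that)
  obtain G where G: "\<And>x y. nlpart b n x y = poly2 G x y" and G_0: "poly2 G 0 0 = 0"
    by (rule nlpart_poly2_representation[of b n]) (rule that)
  from jac obtain c where jac_c: "\<And>x y. jac_det P Q x y = c"
    by blast
  have "P x y = x + poly2 F x y" "Q x y = y + poly2 G x y"
    "deriv (\<lambda>t. poly2 F t y) x + deriv (\<lambda>t. poly2 G x t) y = 0" for x y
    using divfree by (simp_all add: P_def Q_def F G)
  note nilpotent = divergence_free_jacobian_nilpotent[OF this(1,2) jac_c this(3) F_grad_0]
  obtain v1 v2 where v: "(v1, v2) \<noteq> (0, 0)"
    and F_const: "deriv_along [:[:v1:]:] [:[:v2:]:] F = 0"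
    and G_const: "deriv_along [:[:v1:]:] [:[:v2:]:] G = 0"
    using nilpotent_jacobian_const_direction[OF nilpotent] by blast
  have proportional: "v1 * nlpart b n x y = v2 * nlpart a n x y" for x y
    using poly2_combination_const[OF nilpotent(1) F_const G_const, of x y]
    by (simp add: F G F_0 G_0)
  have along_v: "nlpart a n (x + s * v1) (y + s * v2) = nlpart a n x y"
    "nlpart b n (x + s * v1) (y + s * v2) = nlpart b n x y" for x y s
    by (simp_all add: F G poly2_const_along_line F_const G_const)
  obtain \<epsilon> where
    "\<forall>x y. nlpart a n x y = (\<Sum>i=2..n. \<epsilon> i * v1 * (v2 * x - v1 * y) ^ i) \<and>
      nlpart b n x y = (\<Sum>i=2..n. \<epsilon> i * v2 * (v2 * x - v1 * y) ^ i)"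
    using nlpart_pair_along_direction[OF v along_v proportional] by blast
  moreover have "v1\<^sup>2 + v2\<^sup>2 \<noteq> 0"
    using v by simp
  ultimately show ?thesis
    by (auto simp: P_def Q_def)
qed

end
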